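(* Let $G$ be a countable graph with maximal degree $\le\mathrm{D}$ and $H=\mathcal{A}+V$ on $\ell^2(G)$, with $\mathcal{A}$ the adjacency matrix and $V$ a bounded real potential. Fix $o\in G$, let $|x|=d(x,o)$ and let $x^m$ denote multiplication by $|x|^m$. Let $m\in\mathbb{N}$ and $\psi\in\ell^2(G)$ with $\|x^m\psi\|<\infty$, and set $x^m(t)\psi=e^{\mathrm{i}tH}x^me^{-\mathrm{i}tH}\psi$ for $t\ge0$. Then for $t\ge0$, $\lim_{s\to t}x^m(s)\psi=x^m(t)\psi$ in $\ell^2(G)$, and $t\mapsto x^m(t)\psi$ is differentiable with $$\frac{\mathrm{d}}{\mathrm{d}t}x^m(t)\psi=\mathrm{i}e^{\mathrm{i}tH}[\mathcal{A},x^m]e^{-\mathrm{i}tH}\psi.$$ *)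

theory Defs
  imports "HOL-Analysis.Analysis"
begin

definition is_l2 :: "('v \<Rightarrow> complex) \<Rightarrow> bool" where
  "is_l2 f \<longleftrightarrow> (\<lambda>x. (cmod (f x))^2) summable_on UNIV"

definition l2norm :: "('v \<Rightarrow> complex) \<Rightarrow> real" where
  "l2norm f = sqrt (infsum (\<lambda>x. (cmod (f x))^2) UNIV)"

definition adj_op :: "('v \<Rightarrow> 'v \<Rightarrow> bool) \<Rightarrow> ('v \<Rightarrow> complex) \<Rightarrow> ('v \<Rightarrow> complex)" where
  "adj_op E \<psi> = (\<lambda>x. \<Sum>y\<in>{y. E x y}. \<psi> y)"

definition ham :: "('v \<Rightarrow> 'v \<Rightarrow> bool) \<Rightarrow> ('v \<Rightarrow> real) \<Rightarrow> ('v \<Rightarrow> complex) \<Rightarrow> ('v \<Rightarrow> complex)" where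
  "ham E V \<psi> = (\<lambda>x. adj_op E \<psi> x + complex_of_real (V x) * \<psi> x)"

definition gdist :: "('v \<Rightarrow> 'v \<Rightarrow> bool) \<Rightarrow> 'v \<Rightarrow> 'v \<Rightarrow> nat" where
  "gdist E x y = (LEAST n. (E ^^ n) x y)"

definition xpow :: "('v \<Rightarrow> 'v \<Rightarrow> bool) \<Rightarrow> 'v \<Rightarrow> nat \<Rightarrow> ('v \<Rightarrow> complex) \<Rightarrow> ('v \<Rightarrow> complex)" where
  "xpow E p m \<psi> = (\<lambda>x. (of_nat (gdist E x p))^m * \<psi> x)"

definition evol :: "('v \<Rightarrow> 'v \<Rightarrow> bool) \<Rightarrow> ('v \<Rightarrow> real) \<Rightarrow> real \<Rightarrow> ('v \<Rightarrow> complex) \<Rightarrow> ('v \<Rightarrow> complex)" where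
  "evol E V t \<psi> = (\<lambda>x. \<Sum>n. ((\<i> * complex_of_real t)^n / of_nat (fact n)) * ((ham E V ^^ n) \<psi>) x)"

definition xt :: "('v \<Rightarrow> 'v \<Rightarrow> bool) \<Rightarrow> ('v \<Rightarrow> real) \<Rightarrow> 'v \<Rightarrow> nat \<Rightarrow> real \<Rightarrow> ('v \<Rightarrow> complex) \<Rightarrow> ('v \<Rightarrow> complex)" where
  "xt E V p m t \<psi> = evol E V t (xpow E p m (evol E V (-t) \<psi>))"

definition comm_Ax :: "('v \<Rightarrow> 'v \<Rightarrow> bool) \<Rightarrow> 'v \<Rightarrow> nat \<Rightarrow> ('v \<Rightarrow> complex) \<Rightarrow> ('v \<Rightarrow> complex)" where
  "comm_Ax E p m \<psi> = (\<lambda>x. adj_op E (xpow E p m \<psi>) x - xpow E p m (adj_op E \<psi>) x)"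

end

theory Submission
  imports Defs
begin

text \<open>Since \<open>H\<close> is bounded, \<open>e\<^sup>i\<^sup>t\<^sup>H\<close> is the exponential of a bounded operator on \<open>\<ell>\<^sup>2\<close> and hence
  norm-differentiable in \<open>t\<close>; the only obstacle is the unbounded factor \<open>|x|\<^sup>m\<close>. The weight
  \<open>w = (1 + |x|)\<^sup>m\<close> changes by at most a factor \<open>2\<^sup>m\<close> across an edge, so \<open>w H w\<^sup>-\<^sup>1\<close> is bounded too
  and \<open>e\<^sup>-\<^sup>i\<^sup>t\<^sup>H = w\<^sup>-\<^sup>1 e\<^sup>-\<^sup>i\<^sup>t\<^sup>w\<^sup>H\<^sup>w\<^sup>\<inverse> w\<close>. As \<open>w \<psi> \<in> \<ell>\<^sup>2\<close> and \<open>|x|\<^sup>m / w\<close> is bounded,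
  \<open>x\<^sup>m(t)\<psi> = e\<^sup>i\<^sup>t\<^sup>H (|x|\<^sup>m / w) e\<^sup>-\<^sup>i\<^sup>t\<^sup>w\<^sup>H\<^sup>w\<^sup>\<inverse> (w \<psi>)\<close> is a product of differentiable operator
  exponentials and a bounded operator. The product rule yields
  \<open>e\<^sup>i\<^sup>t\<^sup>H (i H |x|\<^sup>m - |x|\<^sup>m i H) e\<^sup>-\<^sup>i\<^sup>t\<^sup>H \<psi>\<close>, and the potential commutes with \<open>|x|\<^sup>m\<close>.\<close>

lemma l2norm_nonneg: "0 \<le> l2norm f"
  unfolding l2norm_def by (simp add: infsum_nonneg)

lemma sum_square_le_l2norm_square:
  assumes "is_l2 f" "finite S"
  shows "(\<Sum>x\<in>S. (cmod (f x))^2) \<le> (l2norm f)^2"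
proof -
  have "(\<Sum>x\<in>S. (cmod (f x))^2) \<le> infsum (\<lambda>x. (cmod (f x))^2) UNIV"
    by (rule finite_sum_le_infsum) (use assms in \<open>auto simp: is_l2_def\<close>)
  then show ?thesis by (simp add: l2norm_def infsum_nonneg)
qed

lemma L2_set_le_l2norm: "is_l2 f \<Longrightarrow> finite S \<Longrightarrow> L2_set (\<lambda>x. cmod (f x)) S \<le> l2norm f"
  using sum_square_le_l2norm_square[of f S] l2norm_nonneg[of f]
  by (simp add: L2_set_def real_le_lsqrt sum_nonneg)

lemma norm_le_l2norm: "is_l2 f \<Longrightarrow> cmod (f x) \<le> l2norm f"
  using L2_set_le_l2norm[of f "{x}"] by simp

lemma l2_if_L2_set_bounded:
  assumes B: "0 \<le> B" and bound: "\<And>S. finite S \<Longrightarrow> L2_set (\<lambda>x. cmod (f x)) S \<le> B"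
  shows "is_l2 f \<and> l2norm f \<le> B"
proof -
  have sum_le: "(\<Sum>x\<in>S. (cmod (f x))^2) \<le> B^2" if "finite S" for S
    using bound[OF that] B unfolding L2_set_def
    by (metis power_mono real_sqrt_ge_zero real_sqrt_pow2 sum_nonneg zero_le_power2)
  have l2: "is_l2 f" unfolding is_l2_def
    by (rule nonneg_bdd_above_summable_on) (auto intro!: bdd_aboveI[where M="B^2"] sum_le)
  have "infsum (\<lambda>x. (cmod (f x))^2) UNIV \<le> B^2"
    by (rule infsum_le_finite_sums) (use l2 sum_le in \<open>auto simp: is_l2_def\<close>)
  then have "l2norm f \<le> sqrt (B^2)" unfolding l2norm_def by (rule real_sqrt_le_mono)
  with B l2 show ?thesis by simp
qed

lemma l2_dominated:
  assumes f: "is_l2 f" and K: "0 \<le> K" and le: "\<And>x. cmod (g x) \<le> K * cmod (f x)"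
  shows "is_l2 g \<and> l2norm g \<le> K * l2norm f"
proof (rule l2_if_L2_set_bounded)
  fix S :: "'a set" assume S: "finite S"
  have "L2_set (\<lambda>x. cmod (g x)) S \<le> L2_set (\<lambda>x. K * cmod (f x)) S"
    by (rule L2_set_mono) (use le in auto)
  also have "\<dots> = K * L2_set (\<lambda>x. cmod (f x)) S"
    using L2_set_right_distrib[OF K, of "\<lambda>x. cmod (f x)" S] by simp
  also have "\<dots> \<le> K * l2norm f"
    using L2_set_le_l2norm[OF f S] K by (simp add: mult_left_mono)
  finally show "L2_set (\<lambda>x. cmod (g x)) S \<le> K * l2norm f" .
qed (use K l2norm_nonneg[of f] in simp)

lemma l2_add:
  assumes f: "is_l2 f" and g: "is_l2 g"
  shows "is_l2 (\<lambda>x. f x + g x) \<and> l2norm (\<lambda>x. f x + g x) \<le> l2norm f + l2norm g"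
proof (rule l2_if_L2_set_bounded)
  fix S :: "'a set" assume S: "finite S"
  have "L2_set (\<lambda>x. cmod (f x + g x)) S \<le> L2_set (\<lambda>x. cmod (f x) + cmod (g x)) S"
    by (rule L2_set_mono) (auto intro: norm_triangle_ineq)
  also have "\<dots> \<le> L2_set (\<lambda>x. cmod (f x)) S + L2_set (\<lambda>x. cmod (g x)) S"
    by (rule L2_set_triangle_ineq)
  also have "\<dots> \<le> l2norm f + l2norm g"
    using L2_set_le_l2norm[OF f S] L2_set_le_l2norm[OF g S] by simp
  finally show "L2_set (\<lambda>x. cmod (f x + g x)) S \<le> l2norm f + l2norm g" .
qed (simp add: add_nonneg_nonneg l2norm_nonneg)

lemma l2_zero: "is_l2 (\<lambda>_. 0)" "l2norm (\<lambda>_. 0) = 0"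
  by (auto simp: is_l2_def l2norm_def)

lemma l2_scale:
  assumes f: "is_l2 f"
  shows "is_l2 (\<lambda>x. c * f x) \<and> l2norm (\<lambda>x. c * f x) = cmod c * l2norm f"
proof (cases "c = 0")
  case True
  then show ?thesis using l2_zero by simp
next
  case False
  have le: "is_l2 (\<lambda>x. c * f x) \<and> l2norm (\<lambda>x. c * f x) \<le> cmod c * l2norm f"
    by (rule l2_dominated[OF f]) (auto simp: norm_mult)
  have "l2norm (\<lambda>x. inverse c * (c * f x)) \<le> cmod (inverse c) * l2norm (\<lambda>x. c * f x)"
    using l2_dominated[OF le[THEN conjunct1], of "cmod (inverse c)"] by (simp add: norm_mult)
  moreover have "(\<lambda>x. inverse c * (c * f x)) = f" using False by auto
  ultimately have "l2norm f \<le> inverse (cmod c) * l2norm (\<lambda>x. c * f x)"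
    by (simp add: norm_inverse)
  with False have "cmod c * l2norm f \<le> l2norm (\<lambda>x. c * f x)"
    by (simp add: field_simps)
  with le show ?thesis by simp
qed

lemma l2_minus: "is_l2 f \<Longrightarrow> is_l2 (\<lambda>x. - f x)"
  using l2_scale[of f "-1"] by simp

lemma l2_diff: "is_l2 f \<Longrightarrow> is_l2 g \<Longrightarrow> is_l2 (\<lambda>x. f x - g x)"
  using l2_add[of f "\<lambda>x. - g x"] l2_minus[of g] by simp

lemma l2norm_eq_0: "is_l2 f \<Longrightarrow> l2norm f = 0 \<Longrightarrow> f = (\<lambda>_. 0)"
  using norm_le_l2norm[of f] by fastforce

lemma l2_indicator: "is_l2 (indicator {a} :: 'a \<Rightarrow> complex)" "l2norm (indicator {a} :: 'a \<Rightarrow> complex) = 1"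
proof -
  have "is_l2 (indicator {a} :: 'a \<Rightarrow> complex) \<and> l2norm (indicator {a} :: 'a \<Rightarrow> complex) \<le> 1"
  proof (rule l2_if_L2_set_bounded)
    fix S :: "'a set" assume "finite S"
    have "(\<lambda>x. (cmod (indicator {a} x :: complex))^2) = (\<lambda>x. if x = a then 1 else 0)"
      by (auto simp: indicator_def)
    with \<open>finite S\<close> show "L2_set (\<lambda>x. cmod (indicator {a} x :: complex)) S \<le> 1"
      unfolding L2_set_def by (simp only: sum.delta) simp
  qed simp
  moreover have "1 \<le> l2norm (indicator {a} :: 'a \<Rightarrow> complex)"
    using norm_le_l2norm[of "indicator {a} :: 'a \<Rightarrow> complex" a] calculation by simp
  ultimately show "is_l2 (indicator {a} :: 'a \<Rightarrow> complex)" "l2norm (indicator {a} :: 'a \<Rightarrow> complex) = 1"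
    by auto
qed

section \<open>The Banach space \<open>\<ell>\<^sup>2\<close>\<close>

typedef 'v ell2 = "{f :: 'v \<Rightarrow> complex. is_l2 f}" morphisms ell2_fun Ell2
  using l2_zero by blast

setup_lifting type_definition_ell2

instantiation ell2 :: (type) real_normed_vector
begin
lift_definition zero_ell2 :: "'a ell2" is "\<lambda>_. 0" by (simp add: l2_zero)
lift_definition plus_ell2 :: "'a ell2 \<Rightarrow> 'a ell2 \<Rightarrow> 'a ell2" is "\<lambda>f g x. f x + g x"
  by (simp add: l2_add)
lift_definition uminus_ell2 :: "'a ell2 \<Rightarrow> 'a ell2" is "\<lambda>f x. - f x" by (simp add: l2_minus)
lift_definition minus_ell2 :: "'a ell2 \<Rightarrow> 'a ell2 \<Rightarrow> 'a ell2" is "\<lambda>f g x. f x - g x"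
  by (simp add: l2_diff)
lift_definition scaleR_ell2 :: "real \<Rightarrow> 'a ell2 \<Rightarrow> 'a ell2" is "\<lambda>r f x. complex_of_real r * f x"
  by (simp add: l2_scale)
lift_definition norm_ell2 :: "'a ell2 \<Rightarrow> real" is l2norm .
definition dist_ell2 :: "'a ell2 \<Rightarrow> 'a ell2 \<Rightarrow> real" where "dist_ell2 a b = norm (a - b)"
definition sgn_ell2 :: "'a ell2 \<Rightarrow> 'a ell2" where "sgn_ell2 a = inverse (norm a) *\<^sub>R a"
definition uniformity_ell2 :: "('a ell2 \<times> 'a ell2) filter" where
  "uniformity_ell2 = (INF e\<in>{0 <..}. principal {(x, y). dist x y < e})"
definition open_ell2 :: "'a ell2 set \<Rightarrow> bool" where
  "open_ell2 S = (\<forall>x\<in>S. \<forall>\<^sub>F (x', y) in uniformity. x' = x \<longrightarrow> y \<in> S)"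
instance
proof
  fix a b c :: "'a ell2" and r s :: real
  show "a + b + c = a + (b + c)" by transfer (auto simp: algebra_simps)
  show "a + b = b + a" by transfer (auto simp: algebra_simps)
  show "0 + a = a" by transfer auto
  show "- a + a = 0" by transfer auto
  show "a - b = a + - b" by transfer auto
  show "r *\<^sub>R (a + b) = r *\<^sub>R a + r *\<^sub>R b" by transfer (auto simp: algebra_simps)
  show "(r + s) *\<^sub>R a = r *\<^sub>R a + s *\<^sub>R a" by transfer (auto simp: algebra_simps)
  show "r *\<^sub>R s *\<^sub>R a = (r * s) *\<^sub>R a" by transfer (auto simp: algebra_simps)
  show "1 *\<^sub>R a = a" by transfer auto
  show "dist a b = norm (a - b)" by (simp add: dist_ell2_def)
  show "sgn a = inverse (norm a) *\<^sub>R a" by (simp add: sgn_ell2_def)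
  show "(norm a = 0) = (a = 0)" by transfer (auto simp: l2norm_eq_0 l2_zero)
  show "norm (a + b) \<le> norm a + norm b" by transfer (simp add: l2_add)
  show "norm (r *\<^sub>R a) = \<bar>r\<bar> * norm a" by transfer (simp add: l2_scale)
qed (simp_all add: uniformity_ell2_def open_ell2_def)
end

lemmas ell2_fun_simps =
  zero_ell2.rep_eq plus_ell2.rep_eq uminus_ell2.rep_eq minus_ell2.rep_eq scaleR_ell2.rep_eq

lemma is_l2_ell2_fun [simp]: "is_l2 (ell2_fun a)"
  using ell2_fun by auto

lemma ell2_fun_Ell2: "is_l2 f \<Longrightarrow> ell2_fun (Ell2 f) = f"
  by (simp add: Ell2_inverse)

lemma norm_ell2_eq: "norm a = l2norm (ell2_fun a)"
  by (simp add: norm_ell2.rep_eq)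

lemma norm_ell2_fun_le: "cmod (ell2_fun a x) \<le> norm a"
  by (simp add: norm_ell2_eq norm_le_l2norm)

lemma bounded_linear_ell2_fun: "bounded_linear (\<lambda>a. ell2_fun a x)"
proof (rule bounded_linear_intro[where K=1])
  fix a b :: "'a ell2" and r :: real
  show "ell2_fun (a + b) x = ell2_fun a x + ell2_fun b x" by (simp add: ell2_fun_simps)
  show "ell2_fun (r *\<^sub>R a) x = r *\<^sub>R ell2_fun a x" by (simp add: ell2_fun_simps scaleR_conv_of_real)
  show "norm (ell2_fun a x) \<le> norm a * 1" using norm_ell2_fun_le by simp
qed

instance ell2 :: (type) banach
proof
  fix X :: "nat \<Rightarrow> 'a ell2" assume C: "Cauchy X"
  define g where "g x = lim (\<lambda>n. ell2_fun (X n) x)" for x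
  have g: "(\<lambda>n. ell2_fun (X n) x) \<longlonglongrightarrow> g x" for x
    unfolding g_def using bounded_linear.Cauchy[OF bounded_linear_ell2_fun C, of x] by (simp add: Cauchy_convergent_iff convergent_LIMSEQ_iff)
  have close: "\<exists>N. \<forall>n\<ge>N. is_l2 (\<lambda>x. ell2_fun (X n) x - g x) \<and> l2norm (\<lambda>x. ell2_fun (X n) x - g x) \<le> e"
    if e: "0 < e" for e
  proof -
    from CauchyD[OF C e] obtain N where N: "\<forall>m\<ge>N. \<forall>n\<ge>N. norm (X m - X n) < e" by blast
    have "is_l2 (\<lambda>x. ell2_fun (X n) x - g x) \<and> l2norm (\<lambda>x. ell2_fun (X n) x - g x) \<le> e"
      if n: "n \<ge> N" for n
    proof (rule l2_if_L2_set_bounded)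
      fix S :: "'a set" assume S: "finite S"
      have "(\<lambda>k. L2_set (\<lambda>x. cmod (ell2_fun (X n) x - ell2_fun (X k) x)) S)
              \<longlonglongrightarrow> L2_set (\<lambda>x. cmod (ell2_fun (X n) x - g x)) S"
        unfolding L2_set_def by (intro tendsto_intros g)
      moreover have "L2_set (\<lambda>x. cmod (ell2_fun (X n) x - ell2_fun (X k) x)) S \<le> e" if "k \<ge> N" for k
      proof -
        have "L2_set (\<lambda>x. cmod (ell2_fun (X n) x - ell2_fun (X k) x)) S \<le> norm (X n - X k)"
          using L2_set_le_l2norm[OF is_l2_ell2_fun S, of "X n - X k"]
          by (simp add: ell2_fun_simps norm_ell2_eq)
        also have "\<dots> < e" using N n that by blast
        finally show ?thesis by simp
      qed
      ultimately show "L2_set (\<lambda>x. cmod (ell2_fun (X n) x - g x)) S \<le> e"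
        by (elim tendsto_upperbound) (auto simp: eventually_sequentially)
    qed (use e in simp)
    then show ?thesis by blast
  qed
  obtain N1 where "is_l2 (\<lambda>x. ell2_fun (X N1) x - g x)" using close[of 1] by auto
  from l2_diff[OF is_l2_ell2_fun[of "X N1"] this] have g_l2: "is_l2 g" by simp
  have "X \<longlonglongrightarrow> Ell2 g"
  proof (rule LIMSEQ_I)
    fix r :: real assume "0 < r"
    then obtain N where N: "\<forall>n\<ge>N. l2norm (\<lambda>x. ell2_fun (X n) x - g x) \<le> r/2"
      using close[of "r/2"] by auto
    have "norm (X n - Ell2 g) = l2norm (\<lambda>x. ell2_fun (X n) x - g x)" for n
      by (simp add: norm_ell2_eq ell2_fun_simps ell2_fun_Ell2[OF g_l2])
    with N \<open>0 < r\<close> show "\<exists>N. \<forall>n\<ge>N. norm (X n - Ell2 g) < r"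
      by (metis field_sum_of_halves half_gt_zero less_add_same_cancel1 order_le_less_trans)
  qed
  then show "convergent X" by (auto simp: convergent_def)
qed

lemma norm_diff_Ell2:
  "is_l2 f \<Longrightarrow> is_l2 g \<Longrightarrow> norm (Ell2 f - Ell2 g) = l2norm (\<lambda>x. f x - g x)"
  by (simp add: norm_ell2_eq ell2_fun_simps ell2_fun_Ell2)

lemma tendsto_l2norm_diff_if_continuous:
  assumes f: "\<And>s. is_l2 (f s)" and cont: "continuous (at t within S) (\<lambda>s. Ell2 (f s))"
  shows "((\<lambda>s. l2norm (\<lambda>x. f s x - f t x)) \<longlongrightarrow> 0) (at t within S)"
proof -
  have "((\<lambda>s. norm (Ell2 (f s) - Ell2 (f t))) \<longlongrightarrow> 0) (at t within S)"
    using cont by (simp add: continuous_within tendsto_norm_zero LIM_zero)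
  then show ?thesis by (simp add: norm_diff_Ell2 f)
qed

lemma tendsto_l2norm_difference_quotient:
  assumes f: "\<And>s. is_l2 (f s)" and g: "is_l2 g"
    and deriv: "((\<lambda>s. Ell2 (f s)) has_vector_derivative Ell2 g) (at t within S)"
  shows "((\<lambda>s. l2norm (\<lambda>x. (f s x - f t x) / complex_of_real (s - t) - g x)) \<longlongrightarrow> 0)
           (at t within S)"
proof -
  let ?F = "\<lambda>s. Ell2 (f s)"
  have "((\<lambda>s. (?F s - ?F t - (s - t) *\<^sub>R Ell2 g) /\<^sub>R norm (s - t)) \<longlongrightarrow> 0) (at t within S)"
    using deriv unfolding has_vector_derivative_def has_derivative_at_within by simp
  then have "((\<lambda>s. norm ((?F s - ?F t - (s - t) *\<^sub>R Ell2 g) /\<^sub>R norm (s - t))) \<longlongrightarrow> 0)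
      (at t within S)"
    by (rule tendsto_norm_zero)
  moreover have "norm ((?F s - ?F t - (s - t) *\<^sub>R Ell2 g) /\<^sub>R norm (s - t))
      = l2norm (\<lambda>x. (f s x - f t x) / complex_of_real (s - t) - g x)" if "s \<noteq> t" for s
  proof -
    have "?F s - ?F t - (s - t) *\<^sub>R Ell2 g = (s - t) *\<^sub>R ((1 / (s - t)) *\<^sub>R (?F s - ?F t) - Ell2 g)"
      using that by (simp add: scaleR_diff_right)
    then have "norm ((?F s - ?F t - (s - t) *\<^sub>R Ell2 g) /\<^sub>R norm (s - t))
        = norm ((1 / (s - t)) *\<^sub>R (?F s - ?F t) - Ell2 g)"
      using that by (simp add: abs_mult)
    then show ?thesis
      by (simp add: norm_ell2_eq ell2_fun_simps ell2_fun_Ell2 f g divide_inverse mult.commute)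
  qed
  then have "\<forall>\<^sub>F s in at t within S. norm ((?F s - ?F t - (s - t) *\<^sub>R Ell2 g) /\<^sub>R norm (s - t))
      = l2norm (\<lambda>x. (f s x - f t x) / complex_of_real (s - t) - g x)"
    by (auto simp: eventually_at_filter)
  ultimately show ?thesis by (rule Lim_transform_eventually)
qed

section \<open>The Banach algebra of bounded operators on \<open>\<ell>\<^sup>2\<close>\<close>

text \<open>A copy of \<^typ>\<open>'v ell2 \<Rightarrow>\<^sub>L 'v ell2\<close> with composition as multiplication, so that the
  exponential of a Banach algebra is available.\<close>

typedef 'v bop = "UNIV :: ('v ell2 \<Rightarrow>\<^sub>L 'v ell2) set" morphisms bop_blinfun Bop ..

setup_lifting type_definition_bop

lemma norm_Ell2_indicator: "norm (Ell2 (indicator {a} :: 'a \<Rightarrow> complex)) = 1"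
  by (simp add: norm_ell2_eq ell2_fun_Ell2 l2_indicator)

instantiation bop :: (type) real_normed_algebra_1
begin
lift_definition zero_bop :: "'a bop" is 0 .
lift_definition one_bop :: "'a bop" is id_blinfun .
lift_definition plus_bop :: "'a bop \<Rightarrow> 'a bop \<Rightarrow> 'a bop" is "(+)" .
lift_definition uminus_bop :: "'a bop \<Rightarrow> 'a bop" is uminus .
lift_definition minus_bop :: "'a bop \<Rightarrow> 'a bop \<Rightarrow> 'a bop" is "(-)" .
lift_definition times_bop :: "'a bop \<Rightarrow> 'a bop \<Rightarrow> 'a bop" is "(o\<^sub>L)" .
lift_definition scaleR_bop :: "real \<Rightarrow> 'a bop \<Rightarrow> 'a bop" is scaleR .
lift_definition norm_bop :: "'a bop \<Rightarrow> real" is norm .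
definition dist_bop :: "'a bop \<Rightarrow> 'a bop \<Rightarrow> real" where "dist_bop a b = norm (a - b)"
definition sgn_bop :: "'a bop \<Rightarrow> 'a bop" where "sgn_bop a = inverse (norm a) *\<^sub>R a"
definition uniformity_bop :: "('a bop \<times> 'a bop) filter" where
  "uniformity_bop = (INF e\<in>{0 <..}. principal {(x, y). dist x y < e})"
definition open_bop :: "'a bop set \<Rightarrow> bool" where
  "open_bop S = (\<forall>x\<in>S. \<forall>\<^sub>F (x', y) in uniformity. x' = x \<longrightarrow> y \<in> S)"
instance
proof
  fix a b c :: "'a bop" and r s :: real
  show "a + b + c = a + (b + c)" by transfer (auto simp: algebra_simps)
  show "a + b = b + a" by transfer (auto simp: algebra_simps)
  show "0 + a = a" by transfer auto
  show "- a + a = 0" by transfer auto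
  show "a - b = a + - b" by transfer auto
  show "r *\<^sub>R (a + b) = r *\<^sub>R a + r *\<^sub>R b" by transfer (auto simp: algebra_simps)
  show "(r + s) *\<^sub>R a = r *\<^sub>R a + s *\<^sub>R a" by transfer (auto simp: algebra_simps)
  show "r *\<^sub>R s *\<^sub>R a = (r * s) *\<^sub>R a" by transfer (auto simp: algebra_simps)
  show "1 *\<^sub>R a = a" by transfer auto
  show "dist a b = norm (a - b)" by (simp add: dist_bop_def)
  show "sgn a = inverse (norm a) *\<^sub>R a" by (simp add: sgn_bop_def)
  show "(norm a = 0) = (a = 0)" by transfer auto
  show "norm (a + b) \<le> norm a + norm b" by transfer (simp add: norm_triangle_ineq)
  show "norm (r *\<^sub>R a) = \<bar>r\<bar> * norm a" by transfer simp
  show "a * b * c = a * (b * c)" by transfer (auto intro!: blinfun_eqI)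
  show "(a + b) * c = a * c + b * c"
    by transfer (auto intro!: blinfun_eqI simp: blinfun.bilinear_simps)
  show "a * (b + c) = a * b + a * c"
    by transfer (auto intro!: blinfun_eqI simp: blinfun.bilinear_simps)
  show "r *\<^sub>R a * b = r *\<^sub>R (a * b)"
    by transfer (auto intro!: blinfun_eqI simp: blinfun.bilinear_simps)
  show "a * r *\<^sub>R b = r *\<^sub>R (a * b)"
    by transfer (auto intro!: blinfun_eqI simp: blinfun.bilinear_simps)
  show "1 * a = a" by transfer (auto intro!: blinfun_eqI)
  show "a * 1 = a" by transfer (auto intro!: blinfun_eqI)
  show "norm (a * b) \<le> norm a * norm b" by transfer (rule norm_blinfun_compose)
  show "norm (1 :: 'a bop) = 1"
    by transfer (rule norm_blinfun_eqI[where x="Ell2 (indicator {undefined})"],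
        auto simp: norm_Ell2_indicator)
  show "(0 :: 'a bop) \<noteq> 1"
    by transfer (metis blinfun.zero_left blinfun_apply_id_blinfun norm_Ell2_indicator norm_zero
        zero_neq_one)
qed (simp_all add: uniformity_bop_def open_bop_def)
end

lemma norm_bop_blinfun: "norm (bop_blinfun a) = norm a"
  by (simp add: norm_bop.rep_eq)

lemma bop_blinfun_diff: "bop_blinfun (a - b) = bop_blinfun a - bop_blinfun b"
  by (simp add: minus_bop.rep_eq)

instance bop :: (type) banach
proof
  fix X :: "nat \<Rightarrow> 'a bop" assume "Cauchy X"
  then have "Cauchy (\<lambda>n. bop_blinfun (X n))"
    by (simp add: Cauchy_def dist_norm norm_bop_blinfun flip: bop_blinfun_diff)
  then obtain L where "(\<lambda>n. bop_blinfun (X n)) \<longlonglongrightarrow> L"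
    by (auto simp: Cauchy_convergent_iff convergent_def)
  then have "X \<longlonglongrightarrow> Bop L"
    by (simp add: LIMSEQ_def dist_norm bop_blinfun_diff Bop_inverse flip: norm_bop_blinfun)
  then show "convergent X" by (auto simp: convergent_def)
qed

definition bop_apply :: "'a bop \<Rightarrow> 'a ell2 \<Rightarrow> 'a ell2" where
  "bop_apply B u = blinfun_apply (bop_blinfun B) u"

lemma bop_apply_mult: "bop_apply (A * B) u = bop_apply A (bop_apply B u)"
  by (simp add: bop_apply_def times_bop.rep_eq)

lemma bop_apply_one: "bop_apply 1 u = u"
  by (simp add: bop_apply_def one_bop.rep_eq)

lemma bounded_bilinear_bop_apply: "bounded_bilinear bop_apply"
proof
  fix a a' :: "'a bop" and b b' :: "'a ell2" and r :: real
  show "bop_apply (a + a') b = bop_apply a b + bop_apply a' b"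
    by (simp add: bop_apply_def plus_bop.rep_eq blinfun.bilinear_simps)
  show "bop_apply a (b + b') = bop_apply a b + bop_apply a b'"
    by (simp add: bop_apply_def blinfun.bilinear_simps)
  show "bop_apply (r *\<^sub>R a) b = r *\<^sub>R bop_apply a b"
    by (simp add: bop_apply_def scaleR_bop.rep_eq blinfun.bilinear_simps)
  show "bop_apply a (r *\<^sub>R b) = r *\<^sub>R bop_apply a b"
    by (simp add: bop_apply_def blinfun.bilinear_simps)
  show "\<exists>K. \<forall>a b. norm (bop_apply a b) \<le> norm a * norm b * K"
    by (auto intro!: exI[where x=1] simp: bop_apply_def norm_blinfun simp flip: norm_bop_blinfun)
qed

interpretation bop_apply: bounded_bilinear bop_apply
  by (rule bounded_bilinear_bop_apply)

lemma has_vector_derivative_exp_sandwich: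
  "((\<lambda>s. bop_apply (exp (s *\<^sub>R A)) (bop_apply Q (bop_apply (exp (s *\<^sub>R - B)) u)))
     has_vector_derivative
       bop_apply (exp (t *\<^sub>R A))
         (bop_apply A (bop_apply Q v) - bop_apply Q (bop_apply B v))) (at t within S)"
  if "v = bop_apply (exp (t *\<^sub>R - B)) u"
proof -
  have "bounded_linear (\<lambda>C. bop_apply Q (bop_apply C u))"
    by (rule bounded_linear_compose[OF bop_apply.bounded_linear_right bop_apply.bounded_linear_left])
  from bounded_linear.has_vector_derivative[OF this exp_scaleR_has_vector_derivative_right]
  have "((\<lambda>s. bop_apply Q (bop_apply (exp (s *\<^sub>R - B)) u))
      has_vector_derivative bop_apply Q (bop_apply (exp (t *\<^sub>R - B) * - B) u)) (at t within S)" .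
  moreover have "bop_apply (exp (t *\<^sub>R - B) * - B) u = - bop_apply B v"
    by (simp only: exp_times_scaleR_commute) (simp add: that bop_apply_mult bop_apply.minus_left)
  ultimately have "((\<lambda>s. bop_apply Q (bop_apply (exp (s *\<^sub>R - B)) u))
      has_vector_derivative - bop_apply Q (bop_apply B v)) (at t within S)"
    by (simp add: bop_apply.minus_right)
  from bop_apply.has_vector_derivative[OF exp_scaleR_has_vector_derivative_right this]
  show ?thesis
    by (simp add: that bop_apply_mult bop_apply.diff_right bop_apply.minus_right)
qed

section \<open>Operators on functions that are bounded on \<open>\<ell>\<^sup>2\<close>\<close>

definition l2_bounded :: "(('a \<Rightarrow> complex) \<Rightarrow> ('a \<Rightarrow> complex)) \<Rightarrow> real \<Rightarrow> bool" where
  "l2_bounded T K \<longleftrightarrow> 0 \<le> K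
     \<and> (\<forall>f g. T (\<lambda>x. f x + g x) = (\<lambda>x. T f x + T g x))
     \<and> (\<forall>c f. T (\<lambda>x. c * f x) = (\<lambda>x. c * T f x))
     \<and> (\<forall>f. is_l2 f \<longrightarrow> is_l2 (T f) \<and> l2norm (T f) \<le> K * l2norm f)"

lemma l2_boundedI:
  assumes "0 \<le> K"
    and "\<And>f g. T (\<lambda>x. f x + g x) = (\<lambda>x. T f x + T g x)"
    and "\<And>c f. T (\<lambda>x. c * f x) = (\<lambda>x. c * T f x)"
    and "\<And>f. is_l2 f \<Longrightarrow> is_l2 (T f) \<and> l2norm (T f) \<le> K * l2norm f"
  shows "l2_bounded T K"
  using assms by (simp add: l2_bounded_def)

lemma
  assumes "l2_bounded T K"
  shows l2_bounded_nonneg: "0 \<le> K"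
    and l2_bounded_add: "T (\<lambda>x. f x + g x) = (\<lambda>x. T f x + T g x)"
    and l2_bounded_scale: "T (\<lambda>x. c * f x) = (\<lambda>x. c * T f x)"
    and l2_bounded_l2: "is_l2 f \<Longrightarrow> is_l2 (T f)"
    and l2_bounded_l2norm_le: "is_l2 f \<Longrightarrow> l2norm (T f) \<le> K * l2norm f"
  using assms by (simp_all add: l2_bounded_def)

lemma funpow_l2_bounded_homogeneous:
  "l2_bounded T K \<Longrightarrow> (T ^^ n) (\<lambda>x. c * f x) = (\<lambda>x. c * (T ^^ n) f x)"
  by (induction n) (simp_all add: l2_bounded_scale)

lemma l2_bounded_scale_op:
  assumes T: "l2_bounded T K"
  shows "l2_bounded (\<lambda>f x. c * T f x) (cmod c * K)"
proof (rule l2_boundedI)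
  fix f :: "'a \<Rightarrow> complex" assume "is_l2 f"
  with T show "is_l2 (\<lambda>x. c * T f x) \<and> l2norm (\<lambda>x. c * T f x) \<le> cmod c * K * l2norm f"
    using l2_scale[OF l2_bounded_l2[OF T]] l2_bounded_l2norm_le[OF T]
    by (simp add: mult.assoc mult_left_mono)
qed (simp_all add: l2_bounded_nonneg[OF T] l2_bounded_add[OF T] l2_bounded_scale[OF T]
      algebra_simps)

lemma funpow_scaled_op:
  "l2_bounded T K \<Longrightarrow> ((\<lambda>f x. c * T f x) ^^ n) f = (\<lambda>x. c ^ n * (T ^^ n) f x)"
  by (induction n) (simp_all add: l2_bounded_scale mult.assoc)

lemma l2_bounded_add_op:
  assumes T: "l2_bounded T K" and S: "l2_bounded S L"
  shows "l2_bounded (\<lambda>f x. T f x + S f x) (K + L)"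
proof (rule l2_boundedI)
  fix f :: "'a \<Rightarrow> complex" assume f: "is_l2 f"
  then show "is_l2 (\<lambda>x. T f x + S f x) \<and> l2norm (\<lambda>x. T f x + S f x) \<le> (K + L) * l2norm f"
    using l2_add[OF l2_bounded_l2[OF T f] l2_bounded_l2[OF S f]]
      l2_bounded_l2norm_le[OF T f] l2_bounded_l2norm_le[OF S f]
    by (simp add: algebra_simps)
qed (simp_all add: l2_bounded_nonneg[OF T] l2_bounded_nonneg[OF S] l2_bounded_add[OF T]
      l2_bounded_add[OF S] l2_bounded_scale[OF T] l2_bounded_scale[OF S] algebra_simps)

lemma l2_bounded_mult_op:
  assumes K: "0 \<le> K" and q: "\<And>x. cmod (q x) \<le> K"
  shows "l2_bounded (\<lambda>f x. q x * f x) K"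
proof (rule l2_boundedI)
  fix f :: "'a \<Rightarrow> complex" assume "is_l2 f"
  then show "is_l2 (\<lambda>x. q x * f x) \<and> l2norm (\<lambda>x. q x * f x) \<le> K * l2norm f"
    by (rule l2_dominated[OF _ K]) (auto simp: norm_mult intro!: mult_right_mono q)
qed (use K in \<open>auto simp: algebra_simps\<close>)

definition bop_of :: "(('a \<Rightarrow> complex) \<Rightarrow> ('a \<Rightarrow> complex)) \<Rightarrow> 'a bop" where
  "bop_of T = Bop (Blinfun (\<lambda>u. Ell2 (T (ell2_fun u))))"

lemma bounded_linear_l2_bounded:
  assumes T: "l2_bounded T K"
  shows "bounded_linear (\<lambda>u. Ell2 (T (ell2_fun u)))"
proof (rule bounded_linear_intro[where K=K])
  fix u v :: "'a ell2" and r :: real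
  show "Ell2 (T (ell2_fun (u + v))) = Ell2 (T (ell2_fun u)) + Ell2 (T (ell2_fun v))"
    by (rule ell2_fun_inject[THEN iffD1])
      (simp add: ell2_fun_simps ell2_fun_Ell2 l2_bounded_l2[OF T] l2_bounded_add[OF T] l2_add)
  show "Ell2 (T (ell2_fun (r *\<^sub>R u))) = r *\<^sub>R Ell2 (T (ell2_fun u))"
    by (rule ell2_fun_inject[THEN iffD1])
      (simp add: ell2_fun_simps ell2_fun_Ell2 l2_bounded_l2[OF T] l2_bounded_scale[OF T] l2_scale)
  show "norm (Ell2 (T (ell2_fun u))) \<le> norm u * K"
    using l2_bounded_l2norm_le[OF T is_l2_ell2_fun]
    by (simp add: norm_ell2_eq ell2_fun_Ell2 l2_bounded_l2[OF T] mult.commute)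
qed

lemma ell2_fun_bop_of:
  "l2_bounded T K \<Longrightarrow> ell2_fun (bop_apply (bop_of T) u) = T (ell2_fun u)"
  by (simp add: bop_apply_def bop_of_def Bop_inverse
      bounded_linear_Blinfun_apply[OF bounded_linear_l2_bounded] ell2_fun_Ell2 l2_bounded_l2)

lemma ell2_fun_bop_of_power:
  "l2_bounded T K \<Longrightarrow> ell2_fun (bop_apply (bop_of T ^ n) u) = (T ^^ n) (ell2_fun u)"
  by (induction n arbitrary: u) (simp_all add: bop_apply_one bop_apply_mult ell2_fun_bop_of)

lemma sums_exp_bop_of:
  assumes T: "l2_bounded T K" and f: "is_l2 f"
  shows "(\<lambda>n. complex_of_real (t ^ n / fact n) * (T ^^ n) f x) sums
           ell2_fun (bop_apply (exp (t *\<^sub>R bop_of T)) (Ell2 f)) x"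
proof -
  have "(\<lambda>n. (t *\<^sub>R bop_of T) ^ n /\<^sub>R fact n) sums exp (t *\<^sub>R bop_of T)"
    unfolding exp_def by (rule summable_sums[OF summable_exp_generic])
  moreover have "bounded_linear (\<lambda>A. ell2_fun (bop_apply A (Ell2 f)) x)"
    by (rule bounded_linear_compose[OF bounded_linear_ell2_fun bop_apply.bounded_linear_left])
  ultimately have "(\<lambda>n. ell2_fun (bop_apply ((t *\<^sub>R bop_of T) ^ n /\<^sub>R fact n) (Ell2 f)) x) sums
      ell2_fun (bop_apply (exp (t *\<^sub>R bop_of T)) (Ell2 f)) x"
    by (rule bounded_linear.sums[rotated])
  moreover have "ell2_fun (bop_apply ((t *\<^sub>R bop_of T) ^ n /\<^sub>R fact n) (Ell2 f)) x
      = complex_of_real (t ^ n / fact n) * (T ^^ n) f x" for n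
    by (simp add: bop_apply.scaleR_left ell2_fun_simps scaleR_power ell2_fun_bop_of_power[OF T]
        ell2_fun_Ell2[OF f] divide_inverse mult_ac)
  ultimately show ?thesis by simp
qed

section \<open>Graphs of bounded degree\<close>

locale bounded_degree_graph =
  fixes E :: "'v \<Rightarrow> 'v \<Rightarrow> bool" and D :: nat
  assumes sym: "\<And>x y. E x y \<longleftrightarrow> E y x"
    and deg: "\<And>x. finite {y. E x y} \<and> card {y. E x y} \<le> D"
begin

lemma finite_neighbours: "finite {y. E x y}"
  using deg by blast

lemma card_neighbours_le: "card {y. E x y} \<le> D"
  using deg by blast

lemma sum_neighbours_le:
  assumes S: "finite S" and g: "\<And>y. 0 \<le> g y"
  shows "(\<Sum>x\<in>S. \<Sum>y\<in>{y. E x y}. g y) \<le> real D * (\<Sum>y\<in>(\<Union>x\<in>S. {y. E x y}). g y)"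
proof -
  define T where "T = (\<Union>x\<in>S. {y. E x y})"
  have T: "finite T" unfolding T_def using S finite_neighbours by auto
  have "(\<Sum>x\<in>S. \<Sum>y\<in>{y. E x y}. g y) = (\<Sum>x\<in>S. \<Sum>y\<in>{y\<in>T. E x y}. g y)"
    by (rule sum.cong) (auto simp: T_def intro!: sum.cong)
  also have "\<dots> = (\<Sum>y\<in>T. \<Sum>x\<in>{x\<in>S. E x y}. g y)"
    by (rule sum.swap_restrict[OF S T])
  also have "\<dots> \<le> (\<Sum>y\<in>T. real D * g y)"
  proof (rule sum_mono)
    fix y
    have "card {x\<in>S. E x y} \<le> card {x. E y x}"
      by (rule card_mono[OF finite_neighbours]) (use sym in blast)
    then have "card {x\<in>S. E x y} \<le> D" using card_neighbours_le[of y] by simp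
    then show "(\<Sum>x\<in>{x\<in>S. E x y}. g y) \<le> real D * g y"
      by (simp add: mult_right_mono g)
  qed
  finally show ?thesis by (simp add: T_def sum_distrib_left)
qed

lemma l2_bounded_neighbour_sum:
  assumes M: "0 \<le> M" and c: "\<And>x y. E x y \<Longrightarrow> cmod (c x y) \<le> M"
  shows "l2_bounded (\<lambda>f x. \<Sum>y\<in>{y. E x y}. c x y * f y) (M * real D)"
proof (rule l2_boundedI)
  fix f :: "'v \<Rightarrow> complex" assume f: "is_l2 f"
  let ?g = "\<lambda>y. (cmod (f y))^2"
  have pointwise: "(cmod (\<Sum>y\<in>{y. E x y}. c x y * f y))^2 \<le> M^2 * real D * (\<Sum>y\<in>{y. E x y}. ?g y)"
    for x
  proof -
    have "cmod (\<Sum>y\<in>{y. E x y}. c x y * f y) \<le> (\<Sum>y\<in>{y. E x y}. M * cmod (f y))"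
      by (rule order_trans[OF norm_sum sum_mono]) (auto simp: norm_mult intro!: mult_right_mono c)
    then have "(cmod (\<Sum>y\<in>{y. E x y}. c x y * f y))^2 \<le> (\<Sum>y\<in>{y. E x y}. M * cmod (f y))^2"
      by (rule power_mono) simp
    also have "\<dots> \<le> (\<Sum>y\<in>{y. E x y}. (M * cmod (f y))^2) * real (card {y. E x y})"
      by (rule sum_squared_le_sum_of_squares)
    also have "\<dots> \<le> (\<Sum>y\<in>{y. E x y}. (M * cmod (f y))^2) * real D"
      by (rule mult_left_mono) (simp_all add: card_neighbours_le sum_nonneg)
    finally show ?thesis by (simp add: power_mult_distrib sum_distrib_left algebra_simps)
  qed
  show "is_l2 (\<lambda>x. \<Sum>y\<in>{y. E x y}. c x y * f y)
      \<and> l2norm (\<lambda>x. \<Sum>y\<in>{y. E x y}. c x y * f y) \<le> M * real D * l2norm f"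
  proof (rule l2_if_L2_set_bounded)
    fix S :: "'v set" assume S: "finite S"
    have "(\<Sum>x\<in>S. (cmod (\<Sum>y\<in>{y. E x y}. c x y * f y))^2)
        \<le> M^2 * real D * (\<Sum>x\<in>S. \<Sum>y\<in>{y. E x y}. ?g y)"
      using sum_mono[OF pointwise] by (simp add: sum_distrib_left)
    also have "\<dots> \<le> M^2 * real D * (real D * (l2norm f)^2)"
    proof (rule mult_left_mono)
      have "finite (\<Union>x\<in>S. {y. E x y})" using S finite_neighbours by blast
      then show "(\<Sum>x\<in>S. \<Sum>y\<in>{y. E x y}. ?g y) \<le> real D * (l2norm f)^2"
        using order_trans[OF sum_neighbours_le[OF S] mult_left_mono[OF sum_square_le_l2norm_square[OF f]]]
        by simp
    qed simp
    also have "\<dots> = (M * real D * l2norm f)^2"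
      by (simp add: power_mult_distrib power2_eq_square)
    finally show "L2_set (\<lambda>x. cmod (\<Sum>y\<in>{y. E x y}. c x y * f y)) S \<le> M * real D * l2norm f"
      unfolding L2_set_def using M l2norm_nonneg[of f] by (simp add: real_sqrt_le_iff real_le_lsqrt)
  qed (use M l2norm_nonneg[of f] in simp)
qed (use M in \<open>auto simp: algebra_simps sum.distrib sum_distrib_left\<close>)

end

section \<open>Schroedinger operators and their conjugates by weights\<close>

lemma comm_Ax_eq_ham_commutator:
  "comm_Ax E p m \<phi> = (\<lambda>x. ham E V (xpow E p m \<phi>) x - xpow E p m (ham E V \<phi>) x)"
  by (auto simp: fun_eq_iff comm_Ax_def ham_def xpow_def algebra_simps)

definition ham_conj ::
    "('v \<Rightarrow> 'v \<Rightarrow> bool) \<Rightarrow> ('v \<Rightarrow> real) \<Rightarrow> ('v \<Rightarrow> real) \<Rightarrow> ('v \<Rightarrow> complex) \<Rightarrow> ('v \<Rightarrow> complex)"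
  where
  "ham_conj E V w f = (\<lambda>x. complex_of_real (w x) * ham E V (\<lambda>y. f y / complex_of_real (w y)) x)"

lemma ham_conj_one: "ham_conj E V (\<lambda>_. 1) = ham E V"
  by (simp add: ham_conj_def fun_eq_iff)

lemma funpow_ham_conj:
  assumes "\<And>x. w x \<noteq> 0"
  shows "(ham_conj E V w ^^ n) (\<lambda>x. complex_of_real (w x) * f x)
           = (\<lambda>x. complex_of_real (w x) * (ham E V ^^ n) f x)"
proof (induction n)
  case (Suc n)
  have "(\<lambda>y. complex_of_real (w y) * (ham E V ^^ n) f y / complex_of_real (w y)) = (ham E V ^^ n) f"
    using assms by (auto simp: fun_eq_iff)
  with Suc show ?case by (simp add: ham_conj_def)
qed simp

definition dist_weight :: "('v \<Rightarrow> 'v \<Rightarrow> bool) \<Rightarrow> 'v \<Rightarrow> nat \<Rightarrow> 'v \<Rightarrow> real" where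
  "dist_weight E p m x = (1 + real (gdist E x p))^m"

lemma dist_weight_pos: "0 < dist_weight E p m x"
  by (simp add: dist_weight_def)

lemma dist_weight_nonzero [simp]: "dist_weight E p m x \<noteq> 0"
  using dist_weight_pos[of E p m x] by simp

lemma one_plus_power_le: "0 \<le> d \<Longrightarrow> (1 + d)^m \<le> 2^m * (1 + d^m)" for d :: real
proof (cases "d \<le> 1")
  case True
  assume "0 \<le> d"
  with True have "(1 + d)^m \<le> 2^m" by (intro power_mono) auto
  then show ?thesis using \<open>0 \<le> d\<close> by (simp add: order_trans)
next
  case False
  then have "(1 + d)^m \<le> (2 * d)^m" by (intro power_mono) auto
  also have "\<dots> \<le> 2^m * (1 + d^m)" by (simp add: power_mult_distrib)
  finally show ?thesis .
qed

lemma l2_dist_weight_mult: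
  assumes psi: "is_l2 \<psi>" and xpsi: "is_l2 (xpow E p m \<psi>)"
  shows "is_l2 (\<lambda>x. complex_of_real (dist_weight E p m x) * \<psi> x)"
proof -
  define h where "h x = complex_of_real (cmod (\<psi> x) + cmod (xpow E p m \<psi> x))" for x
  have "is_l2 (\<lambda>x. complex_of_real (cmod (\<psi> x)))"
    and "is_l2 (\<lambda>x. complex_of_real (cmod (xpow E p m \<psi> x)))"
    using l2_dominated[OF psi, of 1] l2_dominated[OF xpsi, of 1] by simp_all
  from l2_add[OF this] have h: "is_l2 h" unfolding h_def of_real_add by blast
  have "cmod (complex_of_real (dist_weight E p m x) * \<psi> x) \<le> 2^m * cmod (h x)" for x
  proof -
    have "cmod (complex_of_real (dist_weight E p m x) * \<psi> x) = dist_weight E p m x * cmod (\<psi> x)"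
      using dist_weight_pos[of E p m x] by (simp add: norm_mult)
    also have "\<dots> \<le> 2^m * (1 + real (gdist E x p)^m) * cmod (\<psi> x)"
      unfolding dist_weight_def by (intro mult_right_mono one_plus_power_le) auto
    also have "\<dots> = 2^m * cmod (h x)"
      unfolding h_def norm_of_real by (simp add: xpow_def norm_mult norm_power algebra_simps)
    finally show ?thesis .
  qed
  then show ?thesis using l2_dominated[OF h, of "2^m"] by simp
qed

lemma xpow_eq_dist_weight_mult:
  "xpow E p m f = (\<lambda>x. complex_of_real (real (gdist E x p)^m / dist_weight E p m x)
                        * (complex_of_real (dist_weight E p m x) * f x))"
  by (simp add: fun_eq_iff xpow_def)

lemma l2_bounded_mult_dist_ratio:
  "l2_bounded (\<lambda>f x. complex_of_real (real (gdist E x p)^m / dist_weight E p m x) * f x) 1"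
proof (rule l2_bounded_mult_op)
  fix x
  have "real (gdist E x p)^m \<le> dist_weight E p m x"
    unfolding dist_weight_def by (rule power_mono) auto
  then show "cmod (complex_of_real (real (gdist E x p)^m / dist_weight E p m x)) \<le> 1"
    using dist_weight_pos[of E p m x] by (simp add: norm_divide norm_power)
qed simp

locale graph_schroedinger = bounded_degree_graph E D for E :: "'v \<Rightarrow> 'v \<Rightarrow> bool" and D +
  fixes V :: "'v \<Rightarrow> real"
  assumes connected: "\<And>x y. \<exists>n. (E ^^ n) x y"
    and V_bounded: "\<exists>C. \<forall>x. \<bar>V x\<bar> \<le> C"
begin

lemma l2_bounded_ham_conj:
  assumes w_pos: "\<And>x. 0 < w x" and R_nonneg: "0 \<le> R"
    and w_ratio: "\<And>x y. E x y \<Longrightarrow> w x \<le> R * w y"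
  shows "\<exists>K. l2_bounded (ham_conj E V w) K"
proof -
  obtain C where C: "\<And>x. \<bar>V x\<bar> \<le> C" using V_bounded by blast
  have w_nz: "\<And>x. complex_of_real (w x) \<noteq> 0" using w_pos by (metis less_irrefl of_real_eq_0_iff)
  have eq: "ham_conj E V w = (\<lambda>f x. (\<Sum>y\<in>{y. E x y}. complex_of_real (w x / w y) * f y)
                                       + complex_of_real (V x) * f x)"
    using w_nz by (simp add: fun_eq_iff ham_conj_def ham_def adj_op_def sum_distrib_left
        distrib_left)
  have ratio_bound: "cmod (complex_of_real (w x / w y)) \<le> R" if "E x y" for x y
    using w_ratio[OF that] w_pos[of x] w_pos[of y] by (simp add: norm_divide pos_divide_le_eq)
  have "l2_bounded (\<lambda>f x. (\<Sum>y\<in>{y. E x y}. complex_of_real (w x / w y) * f y)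
                         + complex_of_real (V x) * f x) (R * real D + C)"
    by (rule l2_bounded_add_op[OF l2_bounded_neighbour_sum[OF R_nonneg ratio_bound]
          l2_bounded_mult_op]) (use C in \<open>auto intro: order_trans[OF abs_ge_zero]\<close>)
  then show ?thesis unfolding eq ..
qed

lemma l2_bounded_ham_conj_one: "\<exists>K. l2_bounded (ham_conj E V (\<lambda>_. 1)) K"
  using l2_bounded_ham_conj[of "\<lambda>_. 1" 1] by simp

lemma l2_bounded_ham: "\<exists>K. l2_bounded (ham E V) K"
  using l2_bounded_ham_conj_one by (simp add: ham_conj_one)

definition ham_conj_gen :: "('v \<Rightarrow> real) \<Rightarrow> 'v bop" where
  "ham_conj_gen w = bop_of (\<lambda>f x. \<i> * ham_conj E V w f x)"

abbreviation ham_gen :: "'v bop" where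
  "ham_gen \<equiv> ham_conj_gen (\<lambda>_. 1)"

lemma ell2_fun_ham_conj_gen:
  assumes "\<exists>K. l2_bounded (ham_conj E V w) K"
  shows "ell2_fun (bop_apply (ham_conj_gen w) u) = (\<lambda>x. \<i> * ham_conj E V w (ell2_fun u) x)"
  using assms ell2_fun_bop_of[OF l2_bounded_scale_op] by (auto simp: ham_conj_gen_def)

lemma sums_evol_conj:
  assumes w_pos: "\<And>x. 0 < w x" and R_nonneg: "0 \<le> R"
    and w_ratio: "\<And>x y. E x y \<Longrightarrow> w x \<le> R * w y"
    and f: "is_l2 (\<lambda>x. complex_of_real (w x) * f x)"
  shows "(\<lambda>n. ((\<i> * complex_of_real t)^n / of_nat (fact n)) * (ham E V ^^ n) f x) sums
      (ell2_fun (bop_apply (exp (t *\<^sub>R ham_conj_gen w)) (Ell2 (\<lambda>x. complex_of_real (w x) * f x))) x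
        / complex_of_real (w x))"
proof -
  obtain K where K: "l2_bounded (ham_conj E V w) K"
    using l2_bounded_ham_conj[of w R] w_pos R_nonneg w_ratio by blast
  have w0: "\<And>x. w x \<noteq> 0" using w_pos by (metis less_irrefl)
  from sums_divide[OF sums_exp_bop_of[OF l2_bounded_scale_op[OF K, of \<i>] f, where t=t and x=x],
      where c="complex_of_real (w x)"]
  show ?thesis
    unfolding ham_conj_gen_def funpow_scaled_op[OF K] funpow_ham_conj[OF w0]
    by (simp add: w0 power_mult_distrib mult_ac)
qed

lemma evol_eq_exp_conj:
  assumes "\<And>x. 0 < w x" "0 \<le> R" "\<And>x y. E x y \<Longrightarrow> w x \<le> R * w y"
    and "is_l2 (\<lambda>x. complex_of_real (w x) * f x)"
  shows "evol E V t f x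
    = ell2_fun (bop_apply (exp (t *\<^sub>R ham_conj_gen w)) (Ell2 (\<lambda>x. complex_of_real (w x) * f x))) x
        / complex_of_real (w x)"
  unfolding evol_def using sums_evol_conj[OF assms] by (rule sums_unique[symmetric])

lemma evol_eq_exp:
  "is_l2 f \<Longrightarrow> evol E V t f = ell2_fun (bop_apply (exp (t *\<^sub>R ham_gen)) (Ell2 f))"
  using evol_eq_exp_conj[of "\<lambda>_. 1" 1 f t] by (auto simp: fun_eq_iff)

lemma evol_scale:
  assumes f: "is_l2 f"
  shows "evol E V t (\<lambda>x. c * f x) = (\<lambda>x. c * evol E V t f x)"
proof
  fix x
  obtain K where K: "l2_bounded (ham E V) K" using l2_bounded_ham by blast
  have "(\<lambda>n. ((\<i> * complex_of_real t)^n / of_nat (fact n)) * (ham E V ^^ n) f x) sums evol E V t f x"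
    using sums_evol_conj[of "\<lambda>_. 1" 1 f t x] f by (simp add: evol_eq_exp)
  from sums_mult[OF this, of c]
  have "(\<lambda>n. ((\<i> * complex_of_real t)^n / of_nat (fact n)) * (ham E V ^^ n) (\<lambda>x. c * f x) x)
      sums (c * evol E V t f x)"
    by (simp add: funpow_l2_bounded_homogeneous[OF K] mult_ac)
  then show "evol E V t (\<lambda>x. c * f x) x = c * evol E V t f x"
    unfolding evol_def by (rule sums_unique[symmetric])
qed

lemma gdist_neighbour_le:
  assumes "E x y"
  shows "gdist E x p \<le> gdist E y p + 1"
proof -
  have "(E ^^ gdist E y p) y p" unfolding gdist_def by (rule LeastI_ex) (rule connected)
  with assms have "(E ^^ Suc (gdist E y p)) x p" by (rule relpowp_Suc_I2)
  then show ?thesis unfolding gdist_def by (simp add: Least_le)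
qed

lemma dist_weight_neighbour_le:
  assumes "E x y"
  shows "dist_weight E p m x \<le> 2^m * dist_weight E p m y"
proof -
  have "1 + real (gdist E x p) \<le> 2 * (1 + real (gdist E y p))"
    using gdist_neighbour_le[OF assms, of p] by simp
  then have "(1 + real (gdist E x p))^m \<le> (2 * (1 + real (gdist E y p)))^m"
    by (rule power_mono) simp
  then show ?thesis by (simp only: dist_weight_def power_mult_distrib)
qed

lemma l2_bounded_ham_conj_dist_weight: "\<exists>K. l2_bounded (ham_conj E V (dist_weight E p m)) K"
  by (rule l2_bounded_ham_conj[of _ "2^m"]) (simp_all add: dist_weight_pos dist_weight_neighbour_le)

end

section \<open>The Heisenberg evolution of \<open>|x|\<^sup>m\<close>\<close>

locale heisenberg_evolution = graph_schroedinger E D V for E :: "'v \<Rightarrow> 'v \<Rightarrow> bool" and D V +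
  fixes p :: 'v and m :: nat and \<psi> :: "'v \<Rightarrow> complex"
  assumes psi_l2: "is_l2 \<psi>" and xpow_psi_l2: "is_l2 (xpow E p m \<psi>)"
begin

definition weighted_psi :: "'v ell2" where
  "weighted_psi = Ell2 (\<lambda>x. complex_of_real (dist_weight E p m x) * \<psi> x)"

definition dist_ratio_op :: "'v bop" where
  "dist_ratio_op = bop_of (\<lambda>f x. complex_of_real (real (gdist E x p)^m / dist_weight E p m x) * f x)"

abbreviation weighted_evol :: "real \<Rightarrow> 'v ell2" where
  "weighted_evol s \<equiv> bop_apply (exp (s *\<^sub>R - ham_conj_gen (dist_weight E p m))) weighted_psi"

lemma ell2_fun_weighted_evol:
  "ell2_fun (weighted_evol s) = (\<lambda>x. complex_of_real (dist_weight E p m x) * evol E V (-s) \<psi> x)"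
proof
  fix x
  have "evol E V (-s) \<psi> x = ell2_fun (weighted_evol s) x / complex_of_real (dist_weight E p m x)"
    unfolding weighted_psi_def
    using evol_eq_exp_conj[OF dist_weight_pos _ dist_weight_neighbour_le
          l2_dist_weight_mult[OF psi_l2 xpow_psi_l2], of "-s"]
    by simp
  then show "ell2_fun (weighted_evol s) x = complex_of_real (dist_weight E p m x) * evol E V (-s) \<psi> x"
    by (simp add: field_simps)
qed

lemma xpow_evol_eq: "xpow E p m (evol E V (-s) \<psi>) = ell2_fun (bop_apply dist_ratio_op (weighted_evol s))"
  unfolding dist_ratio_op_def ell2_fun_bop_of[OF l2_bounded_mult_dist_ratio] ell2_fun_weighted_evol
  by (rule xpow_eq_dist_weight_mult)

lemma xt_eq_exp:
  "xt E V p m s \<psi>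
     = ell2_fun (bop_apply (exp (s *\<^sub>R ham_gen)) (bop_apply dist_ratio_op (weighted_evol s)))"
  unfolding xt_def xpow_evol_eq by (simp add: evol_eq_exp Ell2_inverse ell2_fun_inverse)

lemma is_l2_xt: "is_l2 (xt E V p m s \<psi>)"
  by (simp add: xt_eq_exp)

lemma ell2_fun_dist_ratio_op:
  "ell2_fun (bop_apply dist_ratio_op u)
     = (\<lambda>x. complex_of_real (real (gdist E x p)^m / dist_weight E p m x) * ell2_fun u x)"
  unfolding dist_ratio_op_def by (rule ell2_fun_bop_of[OF l2_bounded_mult_dist_ratio])

abbreviation generator_commutator :: "real \<Rightarrow> 'v ell2" where
  "generator_commutator t \<equiv>
     bop_apply ham_gen (bop_apply dist_ratio_op (weighted_evol t))
       - bop_apply dist_ratio_op (bop_apply (ham_conj_gen (dist_weight E p m)) (weighted_evol t))"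

lemma ell2_fun_generator_commutator:
  "ell2_fun (generator_commutator t) = (\<lambda>x. \<i> * comm_Ax E p m (evol E V (-t) \<psi>) x)"
proof -
  let ?\<phi> = "evol E V (-t) \<psi>"
  have H: "ell2_fun (bop_apply ham_gen (bop_apply dist_ratio_op (weighted_evol t)))
      = (\<lambda>x. \<i> * ham E V (xpow E p m ?\<phi>) x)"
    using ell2_fun_ham_conj_gen[OF l2_bounded_ham_conj_one] by (simp add: ham_conj_one xpow_evol_eq)
  have "(\<lambda>y. complex_of_real (dist_weight E p m y) * ?\<phi> y / complex_of_real (dist_weight E p m y))
      = ?\<phi>"
    by (simp add: fun_eq_iff)
  then have "ell2_fun (bop_apply dist_ratio_op (bop_apply (ham_conj_gen (dist_weight E p m)) (weighted_evol t)))
      = (\<lambda>x. \<i> * xpow E p m (ham E V ?\<phi>) x)"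
    unfolding ell2_fun_dist_ratio_op ell2_fun_ham_conj_gen[OF l2_bounded_ham_conj_dist_weight]
      ell2_fun_weighted_evol
    by (simp add: ham_conj_def xpow_def fun_eq_iff)
  with H show ?thesis
    by (simp add: ell2_fun_simps comm_Ax_eq_ham_commutator[where V=V] algebra_simps)
qed

lemma is_l2_comm_Ax_evol: "is_l2 (comm_Ax E p m (evol E V (-t) \<psi>))"
proof -
  have "is_l2 (\<lambda>x. - \<i> * ell2_fun (generator_commutator t) x)"
    using l2_scale[OF is_l2_ell2_fun] by blast
  then show ?thesis unfolding ell2_fun_generator_commutator by simp
qed

lemma ell2_fun_evolved_commutator:
  "ell2_fun (bop_apply (exp (t *\<^sub>R ham_gen)) (generator_commutator t))
     = (\<lambda>x. \<i> * evol E V t (comm_Ax E p m (evol E V (-t) \<psi>)) x)"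
proof -
  have "ell2_fun (bop_apply (exp (t *\<^sub>R ham_gen)) (generator_commutator t))
      = evol E V t (ell2_fun (generator_commutator t))"
    by (simp add: evol_eq_exp ell2_fun_inverse)
  also have "\<dots> = evol E V t (\<lambda>x. \<i> * comm_Ax E p m (evol E V (-t) \<psi>) x)"
    by (simp only: ell2_fun_generator_commutator)
  finally show ?thesis by (simp only: evol_scale[OF is_l2_comm_Ax_evol])
qed

lemma is_l2_evolved_commutator:
  "is_l2 (\<lambda>x. \<i> * evol E V t (comm_Ax E p m (evol E V (-t) \<psi>)) x)"
  by (simp flip: ell2_fun_evolved_commutator)

lemma xt_has_vector_derivative:
  "((\<lambda>s. Ell2 (xt E V p m s \<psi>)) has_vector_derivative
      Ell2 (\<lambda>x. \<i> * evol E V t (comm_Ax E p m (evol E V (-t) \<psi>)) x)) (at t within S)"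
  unfolding xt_eq_exp ell2_fun_inverse ell2_fun_evolved_commutator[symmetric]
  by (rule has_vector_derivative_exp_sandwich) simp

end

theorem corollaryA2:
  fixes E :: "'v::countable \<Rightarrow> 'v \<Rightarrow> bool" and V :: "'v \<Rightarrow> real"
    and D :: nat and p :: 'v and m :: nat and \<psi> :: "'v \<Rightarrow> complex"
  assumes sym: "\<And>x y. E x y \<longleftrightarrow> E y x"
    and irrefl: "\<And>x. \<not> E x x"
    and connected: "\<And>x y. \<exists>n. (E ^^ n) x y"
    and deg: "\<And>x. finite {y. E x y} \<and> card {y. E x y} \<le> D"
    and Vbdd: "\<exists>C. \<forall>x. \<bar>V x\<bar> \<le> C"
    and psi: "is_l2 \<psi>"
    and xpsi: "is_l2 (xpow E p m \<psi>)"
  shows "\<forall>t\<ge>0.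
           is_l2 (xt E V p m t \<psi>)
         \<and> ((\<lambda>s. l2norm (\<lambda>x. xt E V p m s \<psi> x - xt E V p m t \<psi> x)) \<longlongrightarrow> 0) (at t within {0..})
         \<and> is_l2 (\<lambda>x. \<i> * evol E V t (comm_Ax E p m (evol E V (-t) \<psi>)) x)
         \<and> ((\<lambda>s. l2norm (\<lambda>x. (xt E V p m s \<psi> x - xt E V p m t \<psi> x) / complex_of_real (s - t)
                              - \<i> * evol E V t (comm_Ax E p m (evol E V (-t) \<psi>)) x))
              \<longlongrightarrow> 0) (at t within {0..})"
proof (intro allI impI conjI)
  interpret heisenberg_evolution E D V p m \<psi>
    by unfold_locales (use sym deg connected Vbdd psi xpsi in auto)
  fix t :: real
  show "is_l2 (xt E V p m t \<psi>)"
    by (rule is_l2_xt)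
  show "((\<lambda>s. l2norm (\<lambda>x. xt E V p m s \<psi> x - xt E V p m t \<psi> x)) \<longlongrightarrow> 0) (at t within {0..})"
    by (rule tendsto_l2norm_diff_if_continuous[OF is_l2_xt
          has_vector_derivative_continuous[OF xt_has_vector_derivative]])
  show "is_l2 (\<lambda>x. \<i> * evol E V t (comm_Ax E p m (evol E V (-t) \<psi>)) x)"
    by (rule is_l2_evolved_commutator)
  show "((\<lambda>s. l2norm (\<lambda>x. (xt E V p m s \<psi> x - xt E V p m t \<psi> x) / complex_of_real (s - t)
                          - \<i> * evol E V t (comm_Ax E p m (evol E V (-t) \<psi>)) x))
          \<longlongrightarrow> 0) (at t within {0..})"
    by (rule tendsto_l2norm_difference_quotient[OF is_l2_xt is_l2_evolved_commutator
          xt_has_vector_derivative])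
qed

end
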